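(* Let $\boldsymbol{\mathcal{G}}=(\mathcal{V},\boldsymbol{\mathcal{E}},\mu(\cdot))$ be a stochastic digraph with vertex set $\mathbb{Z}_n=\{1,\dots,n\}$, edge sets $\mathcal{E}_1,\dots,\mathcal{E}_h$, and out-neighborhood map $H(x,w)=\{y\in\mathbb{Z}_n:(x,y)\in\mathcal{E}_w\}$, and assume that there is no pair $(i,w)\in\mathbb{Z}_n\times\mathbb{Z}_h$ with $\mu(\{w\})>0$ and $H(i,w)=\emptyset$. Let $\boldsymbol{x}$ be a stochastic directed path of $\boldsymbol{\mathcal{G}}$, i.e., $\boldsymbol{x}\in\mathcal{S}(x)$ for some $x\in\mathbb{Z}_n$. For $i,j\in\mathbb{Z}_n$ define $$\ell_{i,j}:=\sum_{s\in\{w\in\mathbb{Z}_h:\,H(i,w)=\{j\}\}}\mu(\{s\})\in[0,1],\qquad m_{i,j}:=\sum_{s\in\{w\in\mathbb{Z}_h:\,H(i,w)\cap\{j\}\neq\emptyset\}}\mu(\{s\})\in[0,1].$$ Then, for each $i,j\in\mathbb{Z}_n$ (and each time $k$), $$\ell_{i,j}\leqslant \mathbb{P}(\boldsymbol{x}_{k+1}=j\mid \boldsymbol{x}_k=i)\leqslant m_{i,j},$$ i.e., $\ell_{i,j}$ and $m_{i,j}$ are a lower and an upper bound, respectively, on the transition probability from node $i$ to node $j$.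
   Context: A stochastic digraph is a triple $\boldsymbol{\mathcal{G}}=(\mathcal{V},\boldsymbol{\mathcal{E}},\mu(\cdot))$ where $\mathcal{V}=\mathbb{Z}_n$, $\boldsymbol{\mathcal{E}}=\{\mathcal{E}_s\}_{s=1}^h$ ($h<\infty$) with each $\mathcal{E}_s\subset\mathbb{Z}_n\times\mathbb{Z}_n$, and $\mu$ is the common distribution of an i.i.d. sequence of random variables $\boldsymbol{w}_k:\Omega\to\mathbb{Z}_h=\{1,\dots,h\}$, $k\in\mathbb{Z}_{\geqslant0}$, on a probability space $(\Omega,\mathcal{F},\mathbb{P})$: $\mu(F)=\mathbb{P}(\boldsymbol{w}_k\in F)$ for $F\subset\mathbb{Z}_h$. A sequence $\{(\phi_k,w_k)\}_{k=0}^K$ is a regular directed path starting at $x$ if $\phi_0=x$ and $\phi_{k+1}\in H(\phi_k,w_k)$ for $k=0,\dots,K-1$. A stochastic directed path from $x$ is a map $\omega\mapsto\{\boldsymbol{x}_k(\omega)\}_{k=0}^{\boldsymbol{K}(\omega)}$, with $\boldsymbol{K}:\Omega\to\mathbb{Z}_{\geqslant0}\cup\{\infty\}$ a random variable, such that (path-wise feasibility) for each $\omega$, $\{(\boldsymbol{x}_k(\omega),\boldsymbol{w}_k(\omega))\}_{k=0}^{\boldsymbol{K}(\omega)}$ is a regular directed path from $x$, and (causal measurability) for each $k$, $\omega\mapsto\boldsymbol{x}_{k+1}(\omega)$ is $\mathcal{F}_k$-measurable, where $(\mathcal{F}_k)_k$ is the minimal filtration generated by $\boldsymbol{w}$ (i.e.,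 $\mathcal{F}_k=\sigma(\boldsymbol{w}_0,\dots,\boldsymbol{w}_k)$). A stochastic directed path is maximal if it cannot be extended; $\mathcal{S}(x)$ denotes the set of maximal stochastic directed paths from $x$. *)

theory Defs
  imports "HOL-Probability.Probability"
begin

definition Hnb :: "nat \<Rightarrow> (nat \<Rightarrow> (nat \<times> nat) set) \<Rightarrow> nat \<Rightarrow> nat \<Rightarrow> nat set" where
  "Hnb n E x s = {y \<in> {1..n}. (x, y) \<in> E s}"

definition stoch_digraph ::
  "nat \<Rightarrow> nat \<Rightarrow> (nat \<Rightarrow> (nat \<times> nat) set) \<Rightarrow> 'a measure \<Rightarrow> (nat \<Rightarrow> 'a \<Rightarrow> nat) \<Rightarrow> bool" where
  "stoch_digraph n h E M w \<longleftrightarrow>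
     1 \<le> n \<and> 1 \<le> h \<and> prob_space M \<and>
     (\<forall>s\<in>{1..h}. E s \<subseteq> {1..n} \<times> {1..n}) \<and>
     (\<forall>k. w k \<in> measurable M (count_space UNIV)) \<and>
     (\<forall>k. \<forall>\<omega>\<in>space M. w k \<omega> \<in> {1..h}) \<and>
     prob_space.indep_vars M (\<lambda>_. count_space UNIV) w UNIV \<and>
     (\<forall>k. distr M (count_space UNIV) (w k) = distr M (count_space UNIV) (w 0))"

definition mu :: "'a measure \<Rightarrow> (nat \<Rightarrow> 'a \<Rightarrow> nat) \<Rightarrow> nat \<Rightarrow> real" where
  "mu M w s = measure M {\<omega> \<in> space M. w 0 \<omega> = s}"

definition nat_filt :: "'a measure \<Rightarrow> (nat \<Rightarrow> 'a \<Rightarrow> nat) \<Rightarrow> nat \<Rightarrow> 'a measure" where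
  "nat_filt M w k = sigma (space M) (\<Union>i\<in>{..k}. {w i -` A \<inter> space M | A. True})"

definition stoch_path ::
  "nat \<Rightarrow> (nat \<Rightarrow> (nat \<times> nat) set) \<Rightarrow> 'a measure \<Rightarrow> (nat \<Rightarrow> 'a \<Rightarrow> nat) \<Rightarrow> nat
    \<Rightarrow> (nat \<Rightarrow> 'a \<Rightarrow> nat) \<Rightarrow> ('a \<Rightarrow> enat) \<Rightarrow> bool" where
  "stoch_path n E M w x0 x K \<longleftrightarrow>
     x0 \<in> {1..n} \<and>
     K \<in> measurable M (count_space UNIV) \<and>
     (\<forall>\<omega>\<in>space M. x 0 \<omega> = x0 \<and>
        (\<forall>k. enat (Suc k) \<le> K \<omega> \<longrightarrow> x (Suc k) \<omega> \<in> Hnb n E (x k \<omega>) (w k \<omega>))) \<and>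
     (\<forall>k. x (Suc k) \<in> measurable (nat_filt M w k) (count_space UNIV))"

definition max_stoch_path ::
  "nat \<Rightarrow> (nat \<Rightarrow> (nat \<times> nat) set) \<Rightarrow> 'a measure \<Rightarrow> (nat \<Rightarrow> 'a \<Rightarrow> nat) \<Rightarrow> nat
    \<Rightarrow> (nat \<Rightarrow> 'a \<Rightarrow> nat) \<Rightarrow> ('a \<Rightarrow> enat) \<Rightarrow> bool" where
  "max_stoch_path n E M w x0 x K \<longleftrightarrow>
     stoch_path n E M w x0 x K \<and>
     (\<forall>x' K'. stoch_path n E M w x0 x' K' \<and>
        (\<forall>\<omega>\<in>space M. K \<omega> \<le> K' \<omega> \<and> (\<forall>k. enat k \<le> K \<omega> \<longrightarrow> x' k \<omega> = x k \<omega>))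
        \<longrightarrow> (\<forall>\<omega>\<in>space M. K' \<omega> = K \<omega>))"

end

theory Submission
  imports Defs
begin

(* Maximality forces a path to stop exactly when it meets an empty out-neighbourhood, since
   otherwise one more, measurably chosen, step would extend it.  Hence the event that the path
   is alive at time k and sits at i is determined by w_0, ..., w_(k-1) and is independent of
   w_k.  On that event, a label s with H(i,s) = {j} forces x_(k+1) = j, while x_(k+1) = j forces
   j in H(i, w_k); the two sums of mu are the probabilities of these two label sets. *)

definition past_filt :: "'a measure \<Rightarrow> (nat \<Rightarrow> 'a \<Rightarrow> 'b) \<Rightarrow> nat \<Rightarrow> 'a measure" where
  "past_filt M w k = sigma (space M) (\<Union>i\<in>{..<k}. {w i -` A \<inter> space M | A. True})"

lemma space_past_filt [simp]: "space (past_filt M w k) = space M"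
  unfolding past_filt_def by (rule space_measure_of) auto

lemma sets_past_filt:
  "sets (past_filt M w k) = sigma_sets (space M) (\<Union>i\<in>{..<k}. {w i -` A \<inter> space M | A. True})"
  unfolding past_filt_def by (rule sets_measure_of) auto

lemma nat_filt_eq_past_filt: "nat_filt M w k = past_filt M w (Suc k)"
  unfolding nat_filt_def past_filt_def lessThan_Suc_atMost ..

lemma measurable_past_filt:
  assumes "i < k"
  shows "w i \<in> measurable (past_filt M w k) (count_space UNIV)"
proof (rule measurableI)
  fix A
  have "w i -` A \<inter> space M \<in> (\<Union>i\<in>{..<k}. {w i -` A \<inter> space M | A. True})"
    using assms by auto
  then show "w i -` A \<inter> space (past_filt M w k) \<in> sets (past_filt M w k)"
    unfolding space_past_filt sets_past_filt by (rule sigma_sets.Basic)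
qed simp

lemma sets_past_filt_mono: "k \<le> k' \<Longrightarrow> sets (past_filt M w k) \<subseteq> sets (past_filt M w k')"
  unfolding sets_past_filt by (rule sigma_sets_mono') fastforce

lemma sets_past_filt_subset:
  assumes "\<And>i. w i \<in> measurable M (count_space UNIV)"
  shows "sets (past_filt M w k) \<subseteq> sets M"
  unfolding sets_past_filt using assms by (intro sets.sigma_sets_subset) auto

lemma measurable_past_filt_mono:
  assumes "k \<le> k'" "f \<in> measurable (past_filt M w k) N"
  shows "f \<in> measurable (past_filt M w k') N"
  using measurable_mono[OF order_refl refl sets_past_filt_mono[OF assms(1)]] assms(2) by auto

lemma measurable_from_past_filt:
  assumes "\<And>i. w i \<in> measurable M (count_space UNIV)" "f \<in> measurable (past_filt M w k) N"
  shows "f \<in> measurable M N"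
  using measurable_mono[OF order_refl refl sets_past_filt_subset[of w M k, OF assms(1)]] assms(2) by auto

lemma measurable_compose_countable2:
  fixes f :: "'a \<Rightarrow> 'b::countable" and g :: "'a \<Rightarrow> 'c::countable"
  assumes "f \<in> measurable N (count_space UNIV)" "g \<in> measurable N (count_space UNIV)"
  shows "(\<lambda>\<omega>. F (f \<omega>) (g \<omega>)) \<in> measurable N (count_space UNIV)"
  by (rule measurable_compose_countable[where f="\<lambda>a \<omega>. F a (g \<omega>)", OF _ assms(1)])
     (rule measurable_compose[OF assms(2)], simp)

lemma measurable_compose_countable3:
  fixes f :: "'a \<Rightarrow> 'b::countable" and g :: "'a \<Rightarrow> 'c::countable" and h :: "'a \<Rightarrow> 'd::countable"
  assumes "f \<in> measurable N (count_space UNIV)" "g \<in> measurable N (count_space UNIV)"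
    "h \<in> measurable N (count_space UNIV)"
  shows "(\<lambda>\<omega>. F (f \<omega>) (g \<omega>) (h \<omega>)) \<in> measurable N (count_space UNIV)"
  by (rule measurable_compose_countable[where f="\<lambda>a \<omega>. F a (g \<omega>) (h \<omega>)", OF _ assms(1)])
     (rule measurable_compose_countable2[OF assms(2,3)])

lemma stoch_path_step:
  "stoch_path n E M w x0 x K \<Longrightarrow> \<omega> \<in> space M \<Longrightarrow> enat (Suc k) \<le> K \<omega> \<Longrightarrow>
    x (Suc k) \<omega> \<in> Hnb n E (x k \<omega>) (w k \<omega>)"
  unfolding stoch_path_def by blast

lemma stoch_path_measurable_past:
  assumes "stoch_path n E M w x0 x K"
  shows "x k \<in> measurable (past_filt M w k) (count_space UNIV)"
proof (cases k)
  case 0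
  have "(\<lambda>_. x0) \<in> measurable (past_filt M w 0) (count_space UNIV)" by simp
  then show ?thesis
    using assms 0 by (subst measurable_cong[where g="\<lambda>_. x0"]) (auto simp: stoch_path_def)
next
  case (Suc m)
  then show ?thesis using assms unfolding stoch_path_def nat_filt_eq_past_filt by auto
qed

lemma stoch_path_measurable:
  "stoch_path n E M w x0 x K \<Longrightarrow> (\<And>i. w i \<in> measurable M (count_space UNIV)) \<Longrightarrow>
    x k \<in> measurable M (count_space UNIV)"
  using measurable_from_past_filt stoch_path_measurable_past by blast

(* Redirects a step only where it is infeasible, which can only happen beyond K: the result
   agrees with x up to K and, via LEAST, takes one more step wherever one is possible. *)
definition extend_path ::
  "nat \<Rightarrow> (nat \<Rightarrow> (nat \<times> nat) set) \<Rightarrow> (nat \<Rightarrow> 'a \<Rightarrow> nat) \<Rightarrow> (nat \<Rightarrow> 'a \<Rightarrow> nat) \<Rightarrow> nat \<Rightarrow> 'a \<Rightarrow> nat"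
where
  "extend_path n E w x k \<omega> = (case k of 0 \<Rightarrow> x 0 \<omega> | Suc m \<Rightarrow>
     (if x k \<omega> \<in> Hnb n E (x m \<omega>) (w m \<omega>) then x k \<omega> else LEAST y. y \<in> Hnb n E (x m \<omega>) (w m \<omega>)))"

definition extend_stop ::
  "nat \<Rightarrow> (nat \<Rightarrow> (nat \<times> nat) set) \<Rightarrow> (nat \<Rightarrow> 'a \<Rightarrow> nat) \<Rightarrow> (nat \<Rightarrow> 'a \<Rightarrow> nat) \<Rightarrow> ('a \<Rightarrow> enat) \<Rightarrow> 'a \<Rightarrow> enat"
where
  "extend_stop n E w x K \<omega> = (case K \<omega> of
     enat m \<Rightarrow> if Hnb n E (x m \<omega>) (w m \<omega>) = {} then enat m else enat (Suc m) | \<infinity> \<Rightarrow> \<infinity>)"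

lemma le_extend_stop: "K \<omega> \<le> extend_stop n E w x K \<omega>"
  unfolding extend_stop_def by (cases "K \<omega>") auto

lemma extend_path_eq:
  "stoch_path n E M w x0 x K \<Longrightarrow> \<omega> \<in> space M \<Longrightarrow> enat k \<le> K \<omega> \<Longrightarrow> extend_path n E w x k \<omega> = x k \<omega>"
  by (cases k) (auto simp: extend_path_def dest: stoch_path_step)

lemma measurable_extend_path:
  assumes "stoch_path n E M w x0 x K"
  shows "extend_path n E w x (Suc k) \<in> measurable (nat_filt M w k) (count_space UNIV)"
proof -
  have "(\<lambda>\<omega>. (\<lambda>a s b. if b \<in> Hnb n E a s then b else LEAST y. y \<in> Hnb n E a s)
          (x k \<omega>) (w k \<omega>) (x (Suc k) \<omega>)) \<in> measurable (past_filt M w (Suc k)) (count_space UNIV)"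
    by (rule measurable_compose_countable3[OF measurable_past_filt_mono[OF _ stoch_path_measurable_past[OF assms]]
          measurable_past_filt stoch_path_measurable_past[OF assms]]) auto
  then show ?thesis unfolding nat_filt_eq_past_filt extend_path_def by simp
qed

lemma measurable_extend_stop:
  assumes "stoch_path n E M w x0 x K" "\<And>i. w i \<in> measurable M (count_space UNIV)"
  shows "extend_stop n E w x K \<in> measurable M (count_space UNIV)"
proof -
  have "K \<in> measurable M (count_space UNIV)" using assms(1) unfolding stoch_path_def by blast
  moreover have "(\<lambda>\<omega>. case e of enat m \<Rightarrow> if Hnb n E (x m \<omega>) (w m \<omega>) = {} then enat m else enat (Suc m)
      | \<infinity> \<Rightarrow> \<infinity>) \<in> measurable M (count_space UNIV)" for e
  proof (cases e)
    case (enat m)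
    have "(\<lambda>\<omega>. (\<lambda>a s. if Hnb n E a s = {} then enat m else enat (Suc m)) (x m \<omega>) (w m \<omega>))
        \<in> measurable M (count_space UNIV)"
      by (rule measurable_compose_countable2[OF stoch_path_measurable[OF assms] assms(2)])
    then show ?thesis using enat by simp
  qed simp
  ultimately show ?thesis
    unfolding extend_stop_def by (rule measurable_compose_countable[rotated])
qed

lemma stoch_path_extend:
  assumes path: "stoch_path n E M w x0 x K" and w: "\<And>i. w i \<in> measurable M (count_space UNIV)"
  shows "stoch_path n E M w x0 (extend_path n E w x) (extend_stop n E w x K)"
  unfolding stoch_path_def
proof (intro conjI ballI allI impI)
  show "x0 \<in> {1..n}" using path unfolding stoch_path_def by blast
  show "extend_stop n E w x K \<in> measurable M (count_space UNIV)"
    by (rule measurable_extend_stop[OF path w])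
  show "extend_path n E w x (Suc k) \<in> measurable (nat_filt M w k) (count_space UNIV)" for k
    by (rule measurable_extend_path[OF path])
next
  fix \<omega> assume "\<omega> \<in> space M"
  then show "extend_path n E w x 0 \<omega> = x0" using path unfolding stoch_path_def extend_path_def by simp
next
  fix \<omega> k assume \<omega>: "\<omega> \<in> space M" and le: "enat (Suc k) \<le> extend_stop n E w x K \<omega>"
  show "extend_path n E w x (Suc k) \<omega> \<in> Hnb n E (extend_path n E w x k \<omega>) (w k \<omega>)"
  proof (cases "enat (Suc k) \<le> K \<omega>")
    case True
    then show ?thesis
      using extend_path_eq[OF path \<omega>] stoch_path_step[OF path \<omega>] by (simp add: Suc_ile_eq order_less_imp_le)
  next
    case False
    with le have K: "K \<omega> = enat k"
      by (cases "K \<omega>") (auto simp: extend_stop_def split: if_splits)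
    with False le have "Hnb n E (x k \<omega>) (w k \<omega>) \<noteq> {}"
      by (auto simp: extend_stop_def split: if_splits)
    with K show ?thesis
      using extend_path_eq[OF path \<omega>, of k] by (auto simp: extend_path_def intro: LeastI_ex)
  qed
qed

lemma max_stoch_path_stopped:
  assumes path: "max_stoch_path n E M w x0 x K" and w: "\<And>i. w i \<in> measurable M (count_space UNIV)"
    and \<omega>: "\<omega> \<in> space M" and K: "K \<omega> = enat m"
  shows "Hnb n E (x m \<omega>) (w m \<omega>) = {}"
proof -
  have sp: "stoch_path n E M w x0 x K" using path unfolding max_stoch_path_def by blast
  have "\<forall>\<omega>\<in>space M. K \<omega> \<le> extend_stop n E w x K \<omega> \<and>
      (\<forall>k. enat k \<le> K \<omega> \<longrightarrow> extend_path n E w x k \<omega> = x k \<omega>)"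
    by (simp add: le_extend_stop extend_path_eq[OF sp])
  then have "\<forall>\<omega>\<in>space M. extend_stop n E w x K \<omega> = K \<omega>"
    using path stoch_path_extend[OF sp w] unfolding max_stoch_path_def by blast
  with \<omega> K show ?thesis unfolding extend_stop_def by (auto split: if_splits)
qed

lemma max_stoch_path_alive_iff:
  assumes path: "max_stoch_path n E M w x0 x K" and w: "\<And>i. w i \<in> measurable M (count_space UNIV)"
    and \<omega>: "\<omega> \<in> space M"
  shows "enat k \<le> K \<omega> \<longleftrightarrow> (\<forall>m<k. Hnb n E (x m \<omega>) (w m \<omega>) \<noteq> {})"
proof
  assume "enat k \<le> K \<omega>"
  then show "\<forall>m<k. Hnb n E (x m \<omega>) (w m \<omega>) \<noteq> {}"
    using path stoch_path_step[OF _ \<omega>] unfolding max_stoch_path_def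
    by (metis Suc_leI empty_iff enat_ord_simps(1) order_trans)
next
  assume alive: "\<forall>m<k. Hnb n E (x m \<omega>) (w m \<omega>) \<noteq> {}"
  show "enat k \<le> K \<omega>"
  proof (cases "K \<omega>")
    case (enat m)
    then have "\<not> m < k" using alive max_stoch_path_stopped[OF path w \<omega>] by blast
    then show ?thesis using enat by simp
  qed simp
qed

lemma max_stoch_path_forced_step:
  assumes path: "max_stoch_path n E M w x0 x K" and w: "\<And>i. w i \<in> measurable M (count_space UNIV)"
    and \<omega>: "\<omega> \<in> space M" and alive: "enat k \<le> K \<omega>" and H: "Hnb n E (x k \<omega>) (w k \<omega>) = {j}"
  shows "enat (Suc k) \<le> K \<omega> \<and> x (Suc k) \<omega> = j"
proof -
  have sp: "stoch_path n E M w x0 x K" using path unfolding max_stoch_path_def by blast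
  have Suc: "enat (Suc k) \<le> K \<omega>"
    using alive H max_stoch_path_alive_iff[OF path w \<omega>] by (auto simp: less_Suc_eq)
  then show ?thesis using stoch_path_step[OF sp \<omega> Suc] H by simp
qed

lemma max_stoch_path_alive_at_past:
  assumes path: "max_stoch_path n E M w x0 x K" and w: "\<And>i. w i \<in> measurable M (count_space UNIV)"
  shows "{\<omega> \<in> space M. enat k \<le> K \<omega> \<and> x k \<omega> = i} \<in> sets (past_filt M w k)"
proof -
  have sp: "stoch_path n E M w x0 x K" using path unfolding max_stoch_path_def by blast
  have step: "Measurable.pred (past_filt M w k) (\<lambda>\<omega>. Hnb n E (x m \<omega>) (w m \<omega>) \<noteq> {})" if "m < k" for m
    by (rule measurable_compose_countable2[where F="\<lambda>a s. Hnb n E a s \<noteq> {}",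
          OF measurable_past_filt_mono[OF _ stoch_path_measurable_past[OF sp]] measurable_past_filt])
      (use that in auto)
  have at: "Measurable.pred (past_filt M w k) (\<lambda>\<omega>. x k \<omega> = i)"
    by (rule measurable_compose[OF stoch_path_measurable_past[OF sp]]) simp
  have "{\<omega> \<in> space M. enat k \<le> K \<omega> \<and> x k \<omega> = i}
      = {\<omega> \<in> space (past_filt M w k). (\<forall>m<k. Hnb n E (x m \<omega>) (w m \<omega>) \<noteq> {}) \<and> x k \<omega> = i}"
    using max_stoch_path_alive_iff[OF path w] by auto
  also have "\<dots> \<in> sets (past_filt M w k)"
    by (intro predE pred_intros_logic(3) pred_intros_countable(1) pred_intros_imp' step at)
  finally show ?thesis .
qed

lemma Int_stable_vimages: "Int_stable {f -` A \<inter> \<Omega> | A. True}"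
proof (rule Int_stableI)
  fix a b assume "a \<in> {f -` A \<inter> \<Omega> | A. True}" "b \<in> {f -` A \<inter> \<Omega> | A. True}"
  then obtain A B where "a = f -` A \<inter> \<Omega>" "b = f -` B \<inter> \<Omega>" by blast
  then have "a \<inter> b = f -` (A \<inter> B) \<inter> \<Omega>" by auto
  then show "a \<inter> b \<in> {f -` A \<inter> \<Omega> | A. True}" by blast
qed

lemma (in prob_space) indep_past_filt_present:
  assumes indep: "indep_vars (\<lambda>_. count_space UNIV) w UNIV" and A: "A \<in> sets (past_filt M w k)"
  shows "prob (A \<inter> (w k -` S \<inter> space M)) = prob A * prob (w k -` S \<inter> space M)"
proof -
  let ?G = "\<lambda>i. {w i -` B \<inter> space M | B. True}"
  define I where "I = case_bool {..<k} {k}"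
  have "indep_sets ?G UNIV"
    using indep unfolding indep_vars_def2 by simp
  then have "indep_sets (\<lambda>b. sigma_sets (space M) (\<Union>i\<in>I b. ?G i)) UNIV"
  proof (intro indep_sets_collect_sigma)
    show "indep_sets ?G (\<Union>b. I b)" if "indep_sets ?G UNIV"
      using that by (rule indep_sets_mono_index[rotated]) simp
    show "Int_stable (?G i)" for i
      by (rule Int_stable_vimages)
    show "disjoint_family_on I UNIV"
      by (auto simp: I_def disjoint_family_on_def split: bool.split)
  qed
  also have "(\<lambda>b. sigma_sets (space M) (\<Union>i\<in>I b. ?G i))
      = case_bool (sets (past_filt M w k)) (sigma_sets (space M) (?G k))"
    by (auto simp: I_def sets_past_filt fun_eq_iff split: bool.split)
  finally have "indep_set (sets (past_filt M w k)) (sigma_sets (space M) (?G k))"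
    unfolding indep_set_def .
  then show ?thesis
    by (rule indep_setD[OF _ A sigma_sets.Basic]) auto
qed

lemma (in prob_space) prob_vimage_eq_sum_mu:
  assumes w: "w k \<in> measurable M (count_space UNIV)" "w 0 \<in> measurable M (count_space UNIV)"
    and same_distr: "distr M (count_space UNIV) (w k) = distr M (count_space UNIV) (w 0)"
    and "finite S"
  shows "prob (w k -` S \<inter> space M) = (\<Sum>s\<in>S. mu M w s)"
proof -
  interpret W: prob_space "distr M (count_space UNIV) (w 0)"
    by (rule prob_space_distr[OF w(2)])
  have "prob (w k -` S \<inter> space M) = W.prob S"
    using w(1) by (simp flip: same_distr add: measure_distr)
  also have "\<dots> = (\<Sum>s\<in>S. W.prob {s})"
    using \<open>finite S\<close> by (intro measure_eq_sum_singleton) auto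
  also have "\<dots> = (\<Sum>s\<in>S. mu M w s)"
    using w(2) by (simp add: measure_distr mu_def vimage_def Int_def conj_commute)
  finally show ?thesis .
qed

lemma prob_alive_at_and_label:
  assumes G: "stoch_digraph n h E M w" and path: "max_stoch_path n E M w x0 x K" and "finite S"
  shows "measure M ({\<omega> \<in> space M. enat k \<le> K \<omega> \<and> x k \<omega> = i} \<inter> (w k -` S \<inter> space M))
    = measure M {\<omega> \<in> space M. enat k \<le> K \<omega> \<and> x k \<omega> = i} * (\<Sum>s\<in>S. mu M w s)"
proof -
  interpret prob_space M using G unfolding stoch_digraph_def by blast
  have w: "\<And>i. w i \<in> measurable M (count_space UNIV)"
    and indep: "indep_vars (\<lambda>_. count_space UNIV) w UNIV"
    and same_distr: "distr M (count_space UNIV) (w k) = distr M (count_space UNIV) (w 0)"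
    using G unfolding stoch_digraph_def by auto
  show ?thesis
    using indep_past_filt_present[OF indep max_stoch_path_alive_at_past[OF path w]]
      prob_vimage_eq_sum_mu[OF w w same_distr \<open>finite S\<close>] by simp
qed

lemma max_stoch_path_transition_lower:
  assumes G: "stoch_digraph n h E M w" and path: "max_stoch_path n E M w x0 x K"
  shows "measure M {\<omega> \<in> space M. enat k \<le> K \<omega> \<and> x k \<omega> = i} * (\<Sum>s\<in>{s\<in>{1..h}. Hnb n E i s = {j}}. mu M w s)
    \<le> measure M {\<omega> \<in> space M. enat (Suc k) \<le> K \<omega> \<and> x k \<omega> = i \<and> x (Suc k) \<omega> = j}"
    (is "_ \<le> measure M ?N")
proof -
  interpret prob_space M using G unfolding stoch_digraph_def by blast
  have w: "\<And>i. w i \<in> measurable M (count_space UNIV)" using G unfolding stoch_digraph_def by auto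
  have sp: "stoch_path n E M w x0 x K" using path unfolding max_stoch_path_def by blast
  let ?A = "{\<omega> \<in> space M. enat k \<le> K \<omega> \<and> x k \<omega> = i}"
  let ?W = "w k -` {s \<in> {1..h}. Hnb n E i s = {j}} \<inter> space M"
  have "Measurable.pred M (\<lambda>\<omega>. enat (Suc k) \<le> K \<omega> \<and> x k \<omega> = i \<and> x (Suc k) \<omega> = j)"
    using sp unfolding stoch_path_def
    by (intro measurable_compose_countable3[where F="\<lambda>a b c. enat (Suc k) \<le> a \<and> b = i \<and> c = j",
          OF _ stoch_path_measurable[OF sp w] stoch_path_measurable[OF sp w]]) blast
  then have N_events: "?N \<in> events"
    by (simp add: pred_def)
  have "?A \<inter> ?W \<subseteq> ?N"
  proof
    fix \<omega> assume "\<omega> \<in> ?A \<inter> ?W"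
    then show "\<omega> \<in> ?N" using max_stoch_path_forced_step[OF path w, of \<omega> k j] by auto
  qed
  have "prob ?A * (\<Sum>s\<in>{s\<in>{1..h}. Hnb n E i s = {j}}. mu M w s) = prob (?A \<inter> ?W)"
    by (rule prob_alive_at_and_label[OF G path, symmetric]) simp
  also have "\<dots> \<le> prob ?N"
    using \<open>?A \<inter> ?W \<subseteq> ?N\<close> N_events by (rule finite_measure_mono)
  finally show ?thesis .
qed

lemma max_stoch_path_transition_upper:
  assumes G: "stoch_digraph n h E M w" and path: "max_stoch_path n E M w x0 x K"
  shows "measure M {\<omega> \<in> space M. enat (Suc k) \<le> K \<omega> \<and> x k \<omega> = i \<and> x (Suc k) \<omega> = j}
    \<le> measure M {\<omega> \<in> space M. enat k \<le> K \<omega> \<and> x k \<omega> = i} * (\<Sum>s\<in>{s\<in>{1..h}. Hnb n E i s \<inter> {j} \<noteq> {}}. mu M w s)"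
    (is "measure M ?N \<le> _")
proof -
  interpret prob_space M using G unfolding stoch_digraph_def by blast
  have w: "\<And>i. w i \<in> measurable M (count_space UNIV)"
    and w_range: "\<And>\<omega>. \<omega> \<in> space M \<Longrightarrow> w k \<omega> \<in> {1..h}"
    using G unfolding stoch_digraph_def by auto
  have sp: "stoch_path n E M w x0 x K" using path unfolding max_stoch_path_def by blast
  let ?A = "{\<omega> \<in> space M. enat k \<le> K \<omega> \<and> x k \<omega> = i}"
  let ?W = "w k -` {s \<in> {1..h}. Hnb n E i s \<inter> {j} \<noteq> {}} \<inter> space M"
  have "?A \<in> events"
    using max_stoch_path_alive_at_past[OF path w] sets_past_filt_subset[of w M k, OF w] by blast
  then have A_W_events: "?A \<inter> ?W \<in> events"
    by (rule sets.Int) (rule measurable_sets[OF w], simp)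
  have "?N \<subseteq> ?A \<inter> ?W"
  proof
    fix \<omega> assume "\<omega> \<in> ?N"
    then show "\<omega> \<in> ?A \<inter> ?W"
      using stoch_path_step[OF sp, of \<omega> k] w_range[of \<omega>] order_trans[of "enat k" "enat (Suc k)" "K \<omega>"]
      by auto
  qed
  then have "prob ?N \<le> prob (?A \<inter> ?W)"
    using A_W_events by (rule finite_measure_mono)
  also have "\<dots> = prob ?A * (\<Sum>s\<in>{s\<in>{1..h}. Hnb n E i s \<inter> {j} \<noteq> {}}. mu M w s)"
    by (rule prob_alive_at_and_label[OF G path]) simp
  finally show ?thesis .
qed

theorem theorem1:
  fixes n h :: nat and E :: "nat \<Rightarrow> (nat \<times> nat) set"
    and M :: "'a measure" and w :: "nat \<Rightarrow> 'a \<Rightarrow> nat"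
    and x0 :: nat and x :: "nat \<Rightarrow> 'a \<Rightarrow> nat" and K :: "'a \<Rightarrow> enat"
    and i j k :: nat
  assumes G: "stoch_digraph n h E M w"
    and noempty: "\<not> (\<exists>i'\<in>{1..n}. \<exists>s\<in>{1..h}. mu M w s > 0 \<and> Hnb n E i' s = {})"
    and path: "max_stoch_path n E M w x0 x K"
    and ij: "i \<in> {1..n}" "j \<in> {1..n}"
    and pos: "measure M {\<omega> \<in> space M. enat k \<le> K \<omega> \<and> x k \<omega> = i} > 0"
  shows "(\<Sum>s\<in>{s\<in>{1..h}. Hnb n E i s = {j}}. mu M w s)
           \<le> measure M {\<omega> \<in> space M. enat (Suc k) \<le> K \<omega> \<and> x k \<omega> = i \<and> x (Suc k) \<omega> = j}
             / measure M {\<omega> \<in> space M. enat k \<le> K \<omega> \<and> x k \<omega> = i}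
       \<and> measure M {\<omega> \<in> space M. enat (Suc k) \<le> K \<omega> \<and> x k \<omega> = i \<and> x (Suc k) \<omega> = j}
             / measure M {\<omega> \<in> space M. enat k \<le> K \<omega> \<and> x k \<omega> = i}
           \<le> (\<Sum>s\<in>{s\<in>{1..h}. Hnb n E i s \<inter> {j} \<noteq> {}}. mu M w s)"
proof -
  have "0 < measure M {\<omega> \<in> space M. enat k \<le> K \<omega> \<and> x k \<omega> = i}"
    by (rule pos)
  then show ?thesis
    using max_stoch_path_transition_lower[OF G path, where k=k and i=i and j=j]
      max_stoch_path_transition_upper[OF G path, where k=k and i=i and j=j]
    by (simp add: le_divide_eq divide_le_eq mult.commute)
qed

end
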